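(* Let $(V,\nu,\tau,\tau^* )$ be a PN space in which $\nu(V)\subseteq D^+$ and $D^+$ is invariant under $\tau$, i.e. $\tau(D^+\times D^+)\subseteq D^+$. If $(p_m)$ is a sequence in $V$ strongly converging to $p\in V$ and $A=\{p_m: m\in\mathbb{N}\}$, then $A$ is a $D$-bounded subset of $V$.
   Context: $\Delta^{+}$ is the set of functions $F:[-\infty,+\infty]\to[0,1]$ that are left-continuous on $\mathbb{R}$, nondecreasing, with $F(0)=0$ and $F(+\infty)=1$, ordered pointwise; $D^{+}=\{F\in\Delta^{+}: l^{-}F(+\infty)=1\}$, where $l^{-}f(x)=\lim_{t\to x^{-}}f(t)$. $\varepsilon_0$ is the d.f. equal to $0$ for $x\le0$ and $1$ for $x>0$. A triangle function is a map $\tau:\Delta^+\times\Delta^+\to\Delta^+$ that is associative, commutative, nondecreasing in each argument, with unit $\varepsilon_0$. A PN space is a quadruple $(V,\nu,\tau,\tau^* )$ with $V$ a real vector space, $\tau\le\tau^*$ continuous triangle functions, and $\nu:V\to\Delta^+$ such that for all $p,q\in V$: (N1) $\nu_p=\varepsilon_0$ iff $p=\theta$; (N2) $\nu_{-p}=\nu_p$; (N3) $\nu_{p+q}\ge\tau(\nu_p,\nu_q)$; (N4) $\nu_p\le\tau^*(\nu_{\lambda p},\nu_{(1-\lambda)p})$ for all $\lambda\in[0,1]$. A sequence $(p_m)$ strongly converges to $p$ if for every $\lambda>0$ there is $N$ with $\nu_{p_m-p}(\lambda)>1-\lambda$ for $m\ge N$. For nonempty $A\subseteq V$, $R_A(x)=l^{-}\inf\{\nu_q(x):q\in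 A\}$ for $x\in[0,+\infty)$ and $R_A(+\infty)=1$; $A$ is $D$-bounded if $R_A\in D^+$. *)

theory Defs
  imports "HOL-Analysis.Analysis" "HOL-Library.Extended_Real"
begin

type_synonym dfun = "ereal \<Rightarrow> real"

definition Delta_plus :: "dfun set" where
  "Delta_plus = {F. (\<forall>x. 0 \<le> F x \<and> F x \<le> 1) \<and> mono F
      \<and> (\<forall>x::real. continuous (at_left x) (\<lambda>t. F (ereal t)))
      \<and> F 0 = 0 \<and> F PInfty = 1}"

definition D_plus :: "dfun set" where
  "D_plus = {F. F \<in> Delta_plus \<and> ((\<lambda>t::real. F (ereal t)) \<longlongrightarrow> 1) at_top}"

definition eps0 :: dfun where
  "eps0 = (\<lambda>x. if x \<le> 0 then 0 else 1)"

definition triangle_function :: "(dfun \<Rightarrow> dfun \<Rightarrow> dfun) \<Rightarrow> bool" where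
  "triangle_function \<tau> \<longleftrightarrow>
     (\<forall>F\<in>Delta_plus. \<forall>G\<in>Delta_plus. \<tau> F G \<in> Delta_plus)
   \<and> (\<forall>F\<in>Delta_plus. \<forall>G\<in>Delta_plus. \<forall>H\<in>Delta_plus. \<tau> (\<tau> F G) H = \<tau> F (\<tau> G H))
   \<and> (\<forall>F\<in>Delta_plus. \<forall>G\<in>Delta_plus. \<tau> F G = \<tau> G F)
   \<and> (\<forall>F\<in>Delta_plus. \<forall>F'\<in>Delta_plus. \<forall>G\<in>Delta_plus. F \<le> F' \<longrightarrow> \<tau> F G \<le> \<tau> F' G)
   \<and> (\<forall>F\<in>Delta_plus. \<tau> F eps0 = F)"

text \<open>Weak convergence in Delta+ (the topology of the modified Levy metric):
  convergence at every continuity point in (0, +infinity) of the limit.\<close>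
definition weak_conv :: "(nat \<Rightarrow> dfun) \<Rightarrow> dfun \<Rightarrow> bool" where
  "weak_conv Fs F \<longleftrightarrow> (\<forall>x::real. x > 0 \<longrightarrow> isCont (\<lambda>t. F (ereal t)) x \<longrightarrow>
       (\<lambda>n. Fs n (ereal x)) \<longlonglongrightarrow> F (ereal x))"

definition continuous_tf :: "(dfun \<Rightarrow> dfun \<Rightarrow> dfun) \<Rightarrow> bool" where
  "continuous_tf \<tau> \<longleftrightarrow> (\<forall>Fs Gs F G. (\<forall>n. Fs n \<in> Delta_plus) \<longrightarrow> (\<forall>n. Gs n \<in> Delta_plus)
      \<longrightarrow> F \<in> Delta_plus \<longrightarrow> G \<in> Delta_plus \<longrightarrow> weak_conv Fs F \<longrightarrow> weak_conv Gs G
      \<longrightarrow> weak_conv (\<lambda>n. \<tau> (Fs n) (Gs n)) (\<tau> F G))"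

definition pn_space :: "('a::real_vector \<Rightarrow> dfun) \<Rightarrow> (dfun \<Rightarrow> dfun \<Rightarrow> dfun) \<Rightarrow> (dfun \<Rightarrow> dfun \<Rightarrow> dfun) \<Rightarrow> bool" where
  "pn_space \<nu> \<tau> \<tau>s \<longleftrightarrow>
     triangle_function \<tau> \<and> triangle_function \<tau>s \<and> continuous_tf \<tau> \<and> continuous_tf \<tau>s
   \<and> (\<forall>F\<in>Delta_plus. \<forall>G\<in>Delta_plus. \<tau> F G \<le> \<tau>s F G)
   \<and> (\<forall>p. \<nu> p \<in> Delta_plus)
   \<and> (\<forall>p. \<nu> p = eps0 \<longleftrightarrow> p = 0)
   \<and> (\<forall>p. \<nu> (- p) = \<nu> p)
   \<and> (\<forall>p q. \<nu> (p + q) \<ge> \<tau> (\<nu> p) (\<nu> q))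
   \<and> (\<forall>p. \<forall>l::real. 0 \<le> l \<and> l \<le> 1 \<longrightarrow> \<nu> p \<le> \<tau>s (\<nu> (l *\<^sub>R p)) (\<nu> ((1 - l) *\<^sub>R p)))"

definition strongly_converges :: "('a::real_vector \<Rightarrow> dfun) \<Rightarrow> (nat \<Rightarrow> 'a) \<Rightarrow> 'a \<Rightarrow> bool" where
  "strongly_converges \<nu> ps p \<longleftrightarrow>
     (\<forall>l::real. l > 0 \<longrightarrow> (\<exists>N. \<forall>m\<ge>N. \<nu> (ps m - p) (ereal l) > 1 - l))"

definition prob_radius :: "('a \<Rightarrow> dfun) \<Rightarrow> 'a set \<Rightarrow> dfun" where
  "prob_radius \<nu> A = (\<lambda>x. if x = PInfty then 1 else if x = MInfty then 0
      else Lim (at_left (real_of_ereal x)) (\<lambda>t. Inf {\<nu> q (ereal t) | q. q \<in> A}))"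

definition D_bounded :: "('a \<Rightarrow> dfun) \<Rightarrow> 'a set \<Rightarrow> bool" where
  "D_bounded \<nu> A \<longleftrightarrow> A \<noteq> {} \<and> prob_radius \<nu> A \<in> D_plus"

end

theory Submission
  imports Defs
begin

text \<open>Put \<open>B = {p\<^sub>m - p}\<close>. Strong convergence gives a uniform lower bound for the
  d.f.s of a tail of \<open>B\<close>, and the finitely many remaining ones lie in \<open>D\<^sup>+\<close>, so \<open>R\<^sub>B \<in> D\<^sup>+\<close>.
  Since \<open>R\<^sub>B \<le> \<nu>(p\<^sub>m - p)\<close>, (N3) and the monotonicity of \<open>\<tau>\<close> give
  \<open>\<tau>(R\<^sub>B, \<nu>(p)) \<le> \<nu>(p\<^sub>m)\<close> for all \<open>m\<close>. The left side lies in \<open>D\<^sup>+\<close> by the invariance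
  of \<open>D\<^sup>+\<close> under \<open>\<tau>\<close>, and a set whose d.f.s have a common lower bound in \<open>D\<^sup>+\<close> is
  \<open>D\<close>-bounded.\<close>

lemma Delta_plus_nonneg: "F \<in> Delta_plus \<Longrightarrow> 0 \<le> F x"
  by (simp add: Delta_plus_def)

lemma Delta_plus_le_one: "F \<in> Delta_plus \<Longrightarrow> F x \<le> 1"
  by (simp add: Delta_plus_def)

lemma Delta_plus_mono: "F \<in> Delta_plus \<Longrightarrow> x \<le> y \<Longrightarrow> F x \<le> F y"
  by (simp add: Delta_plus_def mono_def)

lemma Delta_plus_nonpos:
  assumes "F \<in> Delta_plus" "x \<le> 0"
  shows "F x = 0"
proof -
  have "F x \<le> F 0"
    using assms by (rule Delta_plus_mono)
  moreover have "F 0 = 0"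
    using assms(1) by (simp add: Delta_plus_def)
  ultimately show ?thesis
    using Delta_plus_nonneg[OF assms(1), of x] by linarith
qed

lemma continuous_at_left_Sup_lessThan:
  fixes g :: "real \<Rightarrow> real"
  assumes "bdd_above (range g)"
  shows "continuous (at_left x) (\<lambda>y. Sup (g ` {..<y}))"
proof -
  let ?h = "\<lambda>y. Sup (g ` {..<y})"
  have bdd: "bdd_above (g ` S)" for S
    using assms by (rule bdd_above_mono) auto
  have h_mono: "?h y \<le> ?h x" if "y \<le> x" for y
    using that bdd by (intro cSup_subset_mono) auto
  show ?thesis
    unfolding continuous_within
  proof (rule order_tendstoI)
    fix a assume "a < ?h x"
    moreover have "g ` {..<x} \<noteq> {}"
      using lt_ex[of x] by blast
    ultimately obtain t where t: "t < x" "a < g t"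
      using less_cSupD[of "g ` {..<x}" a] by auto
    have "a < ?h y" if "t < y" for y
    proof -
      have "g t \<le> ?h y"
        using that bdd by (intro cSup_upper) auto
      then show ?thesis
        using t(2) by linarith
    qed
    then show "\<forall>\<^sub>F y in at_left x. a < ?h y"
      by (intro eventually_at_leftI[OF _ t(1)]) simp
  next
    fix a assume "?h x < a"
    then show "\<forall>\<^sub>F y in at_left x. ?h y < a"
      by (intro eventually_at_leftI[of "x - 1"]) (auto intro: le_less_trans[OF h_mono])
  qed
qed

definition df_inf :: "('a \<Rightarrow> dfun) \<Rightarrow> 'a set \<Rightarrow> real \<Rightarrow> real" where
  "df_inf \<nu> A t = (INF q\<in>A. \<nu> q (ereal t))"

context
  fixes \<nu> :: "'a \<Rightarrow> dfun" and A :: "'a set"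
  assumes Delta: "\<And>q. q \<in> A \<Longrightarrow> \<nu> q \<in> Delta_plus" and nonempty: "A \<noteq> {}"
begin

lemma df_inf_le: "q \<in> A \<Longrightarrow> df_inf \<nu> A t \<le> \<nu> q (ereal t)"
  unfolding df_inf_def
  by (intro cINF_lower bdd_belowI2[of _ 0] Delta_plus_nonneg Delta)

lemma df_inf_greatest: "(\<And>q. q \<in> A \<Longrightarrow> c \<le> \<nu> q (ereal t)) \<Longrightarrow> c \<le> df_inf \<nu> A t"
  unfolding df_inf_def by (rule cINF_greatest) (use nonempty in auto)

lemma df_inf_nonneg: "0 \<le> df_inf \<nu> A t"
  by (rule df_inf_greatest) (simp add: Delta_plus_nonneg Delta)

lemma df_inf_le_one: "df_inf \<nu> A t \<le> 1"
proof -
  obtain q where q: "q \<in> A"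
    using nonempty by blast
  show ?thesis
    using df_inf_le[OF q, of t] Delta_plus_le_one[OF Delta[OF q]] by (rule order_trans)
qed

lemma df_inf_mono: "s \<le> t \<Longrightarrow> df_inf \<nu> A s \<le> df_inf \<nu> A t"
  by (rule df_inf_greatest, rule order_trans[OF df_inf_le]) (auto intro: Delta_plus_mono Delta)

lemma df_inf_nonpos:
  assumes "t \<le> 0"
  shows "df_inf \<nu> A t = 0"
proof -
  obtain q where q: "q \<in> A"
    using nonempty by blast
  have "\<nu> q (ereal t) = 0"
    using Delta_plus_nonpos[OF Delta[OF q]] assms by (simp add: zero_ereal_def)
  then have "df_inf \<nu> A t \<le> 0"
    using df_inf_le[OF q, of t] by linarith
  then show ?thesis
    using df_inf_nonneg by (rule antisym)
qed

lemma prob_radius_ereal: "prob_radius \<nu> A (ereal x) = Sup (df_inf \<nu> A ` {..<x})"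
proof -
  have "(df_inf \<nu> A \<longlongrightarrow> Sup (df_inf \<nu> A ` {..<x})) (at_left x)"
    using Lim_left_bound[where I = UNIV and f = "df_inf \<nu> A" and K = 1] df_inf_mono df_inf_le_one by simp
  moreover have "(\<lambda>t. Inf {\<nu> q (ereal t) | q. q \<in> A}) = df_inf \<nu> A"
    by (simp add: df_inf_def fun_eq_iff Setcompr_eq_image)
  ultimately show ?thesis
    unfolding prob_radius_def by (simp add: tendsto_Lim)
qed

lemma prob_radius_in_Delta_plus: "prob_radius \<nu> A \<in> Delta_plus"
proof -
  let ?R = "prob_radius \<nu> A"
  have SUP_le_one: "Sup (df_inf \<nu> A ` {..<x}) \<le> 1" for x
    by (rule cSUP_least) (auto simp: df_inf_le_one intro: lt_ex)
  have le_SUP: "df_inf \<nu> A t \<le> Sup (df_inf \<nu> A ` {..<x})" if "t < x" for t x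
    using that by (intro cSUP_upper bdd_aboveI2[of _ _ 1]) (auto simp: df_inf_le_one)
  have SUP_nonneg: "0 \<le> Sup (df_inf \<nu> A ` {..<x})" for x
    using le_SUP[of "x - 1" x] df_inf_nonneg[of "x - 1"] by linarith
  have SUP_mono: "Sup (df_inf \<nu> A ` {..<x}) \<le> Sup (df_inf \<nu> A ` {..<y})" if "x \<le> y" for x y
    using that by (intro cSup_subset_mono bdd_aboveI2[of _ _ 1]) (auto simp: df_inf_le_one intro: lt_ex)
  have infinities: "?R \<infinity> = 1" "?R (-\<infinity>) = 0"
    by (simp_all add: prob_radius_def)
  have "0 \<le> ?R x \<and> ?R x \<le> 1" for x
    by (cases x) (simp_all add: infinities prob_radius_ereal SUP_nonneg SUP_le_one)
  moreover have "mono ?R"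
  proof (rule monoI)
    fix x y :: ereal assume "x \<le> y"
    then show "?R x \<le> ?R y"
      by (cases x; cases y)
        (simp_all add: infinities prob_radius_ereal SUP_nonneg SUP_le_one SUP_mono)
  qed
  moreover have "continuous (at_left x) (\<lambda>t. ?R (ereal t))" for x :: real
    unfolding prob_radius_ereal
    by (rule continuous_at_left_Sup_lessThan) (auto intro: bdd_aboveI2 df_inf_le_one)
  moreover have "?R 0 = 0"
  proof -
    have "Sup (df_inf \<nu> A ` {..<0}) \<le> 0"
      by (rule cSUP_least) (auto simp: df_inf_nonpos intro: lt_ex)
    then show ?thesis
      using prob_radius_ereal[of 0] SUP_nonneg[of 0] by (simp add: zero_ereal_def)
  qed
  ultimately show ?thesis
    unfolding Delta_plus_def using infinities by simp
qed

lemma prob_radius_le: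
  assumes q: "q \<in> A"
  shows "prob_radius \<nu> A \<le> \<nu> q"
proof (rule le_funI)
  fix x
  show "prob_radius \<nu> A x \<le> \<nu> q x"
  proof (cases x)
    case (real r)
    have "Sup (df_inf \<nu> A ` {..<r}) \<le> \<nu> q (ereal r)"
    proof (rule cSUP_least)
      show "{..<r} \<noteq> {}"
        using lt_ex[of r] by blast
    next
      fix s assume "s \<in> {..<r}"
      then show "df_inf \<nu> A s \<le> \<nu> q (ereal r)"
        using df_inf_le[OF q, of s] Delta_plus_mono[OF Delta[OF q], of "ereal s" "ereal r"] by simp
    qed
    then show ?thesis
      by (simp add: real prob_radius_ereal)
  next
    case PInf
    then show ?thesis
      using Delta[OF q] by (simp add: prob_radius_def Delta_plus_def)
  next
    case MInf
    then show ?thesis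
      using Delta_plus_nonneg[OF Delta[OF q]] by (simp add: prob_radius_def)
  qed
qed

lemma D_bounded_if_tendsto_df_inf:
  assumes lim: "(df_inf \<nu> A \<longlongrightarrow> 1) at_top"
  shows "D_bounded \<nu> A"
proof -
  have "filterlim (\<lambda>t::real. t - 1) at_top at_top"
    using filterlim_tendsto_add_at_top[OF tendsto_const[of "-1"] filterlim_ident] by simp
  then have shifted: "((\<lambda>t. df_inf \<nu> A (t - 1)) \<longlongrightarrow> 1) at_top"
    by (rule filterlim_compose[OF lim])
  have lower: "df_inf \<nu> A (t - 1) \<le> prob_radius \<nu> A (ereal t)" for t
    unfolding prob_radius_ereal by (intro cSUP_upper bdd_aboveI2[of _ _ 1]) (auto simp: df_inf_le_one)
  have upper: "prob_radius \<nu> A (ereal t) \<le> 1" for t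
    by (simp add: Delta_plus_le_one prob_radius_in_Delta_plus)
  have "((\<lambda>t. prob_radius \<nu> A (ereal t)) \<longlongrightarrow> 1) at_top"
    by (rule tendsto_sandwich[OF _ _ shifted tendsto_const]) (simp_all add: lower upper)
  then show ?thesis
    unfolding D_bounded_def D_plus_def using nonempty prob_radius_in_Delta_plus by simp
qed

lemma D_bounded_if_D_plus_lower_bound:
  assumes G: "G \<in> D_plus" and le: "\<And>q. q \<in> A \<Longrightarrow> G \<le> \<nu> q"
  shows "D_bounded \<nu> A"
proof (rule D_bounded_if_tendsto_df_inf)
  have lower: "G (ereal t) \<le> df_inf \<nu> A t" for t
    using le by (intro df_inf_greatest) (simp add: le_fun_def)
  have lim_G: "((\<lambda>t. G (ereal t)) \<longlongrightarrow> 1) at_top"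
    using G by (simp add: D_plus_def)
  show "(df_inf \<nu> A \<longlongrightarrow> 1) at_top"
    by (rule tendsto_sandwich[OF _ _ lim_G tendsto_const]) (simp_all add: lower df_inf_le_one)
qed

end

lemma eventually_less_INF_if_near_eps0:
  fixes Fs :: "nat \<Rightarrow> dfun"
  assumes D: "\<And>m. Fs m \<in> D_plus"
    and near_eps0: "\<And>l. l > 0 \<Longrightarrow> \<exists>N. \<forall>m\<ge>N. Fs m (ereal l) > 1 - l"
    and "a < 1"
  shows "\<forall>\<^sub>F t in at_top. a < (INF m. Fs m (ereal t))"
proof -
  have Delta: "Fs m \<in> Delta_plus" for m
    using D by (simp add: D_plus_def)
  \<comment> \<open>The tail only yields \<open>b \<le> INF\<close>, hence \<open>b\<close> strictly between \<open>a\<close> and \<open>1\<close>.\<close>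
  define b where "b = (a + 1) / 2"
  have b: "a < b" "b < 1"
    using \<open>a < 1\<close> by (simp_all add: b_def)
  obtain N where N: "\<And>m. m \<ge> N \<Longrightarrow> b < Fs m (ereal (1 - b))"
    using near_eps0[of "1 - b"] b by auto
  have "\<forall>m\<in>{..<N}. \<forall>\<^sub>F t in at_top. b < Fs m (ereal t)"
    using D b(2) by (auto simp: D_plus_def dest: order_tendstoD(1))
  then have "\<forall>\<^sub>F t in at_top. \<forall>m\<in>{..<N}. b < Fs m (ereal t)"
    by (rule eventually_ball_finite[rotated]) simp
  moreover have "\<forall>\<^sub>F t in at_top. 1 - b \<le> t"
    by (rule eventually_ge_at_top)
  ultimately have "\<forall>\<^sub>F t in at_top. b \<le> (INF m. Fs m (ereal t))"
  proof eventually_elim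
    case (elim t)
    show ?case
    proof (rule cINF_greatest)
      fix m
      show "b \<le> Fs m (ereal t)"
      proof (cases "m < N")
        case True
        then show ?thesis
          using elim(1) by (simp add: less_imp_le)
      next
        case False
        then have "b < Fs m (ereal (1 - b))"
          by (simp add: N)
        also have "\<dots> \<le> Fs m (ereal t)"
          using elim(2) by (simp add: Delta_plus_mono[OF Delta])
        finally show ?thesis
          by simp
      qed
    qed simp
  qed
  then show ?thesis
    by eventually_elim (use b(1) in linarith)
qed

lemma tendsto_INF_D_plus_one:
  fixes Fs :: "nat \<Rightarrow> dfun"
  assumes D: "\<And>m. Fs m \<in> D_plus"
    and near_eps0: "\<And>l. l > 0 \<Longrightarrow> \<exists>N. \<forall>m\<ge>N. Fs m (ereal l) > 1 - l"
  shows "((\<lambda>t. INF m. Fs m (ereal t)) \<longlongrightarrow> 1) at_top"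
proof (rule order_tendstoI)
  fix a :: real assume "a < 1"
  with D near_eps0 show "\<forall>\<^sub>F t in at_top. a < (INF m. Fs m (ereal t))"
    by (rule eventually_less_INF_if_near_eps0[of Fs])
next
  fix a :: real assume "1 < a"
  have Delta: "Fs m \<in> Delta_plus" for m
    using D by (simp add: D_plus_def)
  have "(INF m. Fs m (ereal t)) \<le> Fs 0 (ereal t)" for t
    by (intro cINF_lower bdd_belowI2[of _ 0] Delta_plus_nonneg Delta) simp
  then show "\<forall>\<^sub>F t in at_top. (INF m. Fs m (ereal t)) < a"
    using Delta_plus_le_one[OF Delta, of 0] \<open>1 < a\<close> by (intro always_eventually allI) (meson le_less_trans order_trans)
qed

lemma D_bounded_diff_if_strongly_converges:
  assumes D: "\<And>q. \<nu> q \<in> D_plus" and conv: "strongly_converges \<nu> ps p"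
  shows "D_bounded \<nu> (range (\<lambda>m. ps m - p))"
proof (rule D_bounded_if_tendsto_df_inf)
  show "\<nu> q \<in> Delta_plus" for q
    using D by (simp add: D_plus_def)
  have "df_inf \<nu> (range (\<lambda>m. ps m - p)) = (\<lambda>t. INF m. \<nu> (ps m - p) (ereal t))"
    by (simp add: df_inf_def fun_eq_iff image_image)
  moreover have "((\<lambda>t. INF m. \<nu> (ps m - p) (ereal t)) \<longlongrightarrow> 1) at_top"
    using conv D by (intro tendsto_INF_D_plus_one) (simp_all add: strongly_converges_def)
  ultimately show "(df_inf \<nu> (range (\<lambda>m. ps m - p)) \<longlongrightarrow> 1) at_top"
    by simp
qed simp

lemma pn_space_Delta_plus: "pn_space \<nu> \<tau> \<tau>s \<Longrightarrow> \<nu> q \<in> Delta_plus"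
  by (simp add: pn_space_def)

lemma pn_space_triangle: "pn_space \<nu> \<tau> \<tau>s \<Longrightarrow> \<tau> (\<nu> q) (\<nu> r) \<le> \<nu> (q + r)"
  by (simp add: pn_space_def)

lemma pn_space_tau_mono:
  assumes "pn_space \<nu> \<tau> \<tau>s" "F \<in> Delta_plus" "F' \<in> Delta_plus" "G \<in> Delta_plus" "F \<le> F'"
  shows "\<tau> F G \<le> \<tau> F' G"
proof -
  have "triangle_function \<tau>"
    using assms(1) by (simp add: pn_space_def)
  then show ?thesis
    using assms(2-) unfolding triangle_function_def by blast
qed

theorem theorem22:
  fixes \<nu> :: "'a::real_vector \<Rightarrow> dfun" and \<tau> \<tau>s :: "dfun \<Rightarrow> dfun \<Rightarrow> dfun"
    and ps :: "nat \<Rightarrow> 'a" and p :: 'a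
  assumes "pn_space \<nu> \<tau> \<tau>s"
    and "\<forall>q. \<nu> q \<in> D_plus"
    and "\<forall>F\<in>D_plus. \<forall>G\<in>D_plus. \<tau> F G \<in> D_plus"
    and "strongly_converges \<nu> ps p"
  shows "D_bounded \<nu> (range ps)"
proof -
  let ?B = "range (\<lambda>m. ps m - p)"
  define H where "H = prob_radius \<nu> ?B"
  have "D_bounded \<nu> ?B"
    using assms(2,4) by (intro D_bounded_diff_if_strongly_converges) simp_all
  then have H: "H \<in> D_plus" "H \<in> Delta_plus"
    by (simp_all add: H_def D_bounded_def D_plus_def)
  have Delta: "\<nu> q \<in> Delta_plus" for q
    using assms(1) by (rule pn_space_Delta_plus)
  have "\<tau> H (\<nu> p) \<le> \<nu> (ps m)" for m
  proof -
    have "H \<le> \<nu> (ps m - p)"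
      unfolding H_def by (rule prob_radius_le) (simp_all add: Delta)
    then have "\<tau> H (\<nu> p) \<le> \<tau> (\<nu> (ps m - p)) (\<nu> p)"
      by (rule pn_space_tau_mono[OF assms(1) H(2) Delta Delta])
    also have "\<dots> \<le> \<nu> (ps m - p + p)"
      using assms(1) by (rule pn_space_triangle)
    finally show ?thesis
      by simp
  qed
  moreover have "\<tau> H (\<nu> p) \<in> D_plus"
    using assms(2,3) H(1) by blast
  ultimately show ?thesis
    by (intro D_bounded_if_D_plus_lower_bound[where G = "\<tau> H (\<nu> p)"]) (auto simp: Delta)
qed

end
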